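(* Let $\bar{\Phi}$, $\bar{\mu}$, $\lambda$ and $R_n$ be as in the context, and let $\delta_0$ be the Dirac mass at the origin of $\bar{\mathbb{K}}$. Then for every $n\in\mathbb{N}$, \[|\bar{\Phi}^n(\delta_0)|\le\frac{\lambda^n}{\bar{\mu}(\{0\})}\,\bar{\mu}(R_n),\] where $|\cdot|$ denotes total mass.
   Context: Let $\beta\in(1,2)$ be an algebraic integer none of whose Galois conjugates has modulus $1$. List all its Galois conjugates (both members of each complex-conjugate pair) as $\beta=\beta_1,\dots,\beta_d,\beta_{d+1},\dots,\beta_{d+s},\beta_{d+s+1}$, where $|\beta_1|,\dots,|\beta_d|>1$, $|\beta_{d+1}|,\dots,|\beta_{d+s}|<1$, and $\beta_{d+s+1}$ is real with $|\beta_{d+s+1}|>1$. For $z\in\mathbb{C}$ let $\mathbb{F}_z=\mathbb{R}$ if $z\in\mathbb{R}$ and $\mathbb{C}$ otherwise; let $\bar{\mathbb{K}}=\prod_{j=1}^{d+s+1}\mathbb{F}_{\beta_j}$, $\bar{\beta}^n=(\beta_1^n,\dots,\beta_{d+s+1}^n)$, and for $i\in\mathbb{Z}$ let $\bar{T}_i(x_1,\dots,x_{d+s+1})=(\beta_1x_1+i,\dots,\beta_{d+s+1}x_{d+s+1}+i)$. Let $\pi_e(x)=(x_1,\dots,x_d)$, $\pi_c(x)=(x_{d+1},\dots,x_{d+s})$, $\pi_{free}(x)=x_{d+s+1}$. For $j\le d$ let $I_{\beta_j}=[-\frac{1}{\beta_j-1},\frac{1}{\beta_j-1}]$ if $\beta_j>1$,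 $I_{\beta_j}=\{x\in\mathbb{R}:|x|\le\frac{2}{|\beta_j|-1}\}$ if $\beta_j<-1$, $I_{\beta_j}=\{z\in\mathbb{C}:|z|\le\frac{2}{|\beta_j|-1}\}$ if $\beta_j\notin\mathbb{R}$; $I=\prod_{j\le d}I_{\beta_j}$ and $S=\{x\in\bar{\mathbb{K}}:\pi_e(x)\in I\}$. Let $\bar{X}=\{\sum_{i=1}^n a_i\bar{\beta}^{n-i}:n\in\mathbb{N},a_i\in\{-1,0,1\}\}\cap S$. For $n\ge1$ and $x\in S$ let $\bar{\mu}_n(\{x\})=\#\{(a,b)\in\{0,1\}^n\times\{0,1\}^n:\sum_{i=1}^n(a_i-b_i)\bar{\beta}^{n-i}=x\}$, with $\bar{\mu}_n$ giving no mass outside $S$. It is known (from earlier work of the authors) that there exist $\lambda>1$ and $f:\bar{X}\to(0,\infty)$ with $\lambda^{-n}\bar{\mu}_n(\{x\})\to f(x)$ for every $x\in\bar{X}$, and that $0<f(x)\le f(0)$; let $\bar{\mu}=\sum_{x\in\bar{X}}f(x)\delta_x$. The operator $\bar{\Phi}$ on measures on $\bar{X}$ is $\bar{\Phi}(\mu)(A)=\mu(\bar{T}_{-1}^{-1}(A))+2\mu(\bar{T}_0^{-1}(A))+\mu(\bar{T}_1^{-1}(A))$ for $A\subset S$, and $\bar{\Phi}(\mu)(A)=\bar{\Phi}(\mu)(A\cap S)$ in general (no mass outside $S$). For $n\ge0$ let $R_n=\{x\in\bar{X}:|\pi_{free}(x)|\le\sum_{i=0}^{n-1}|\beta_{d+s+1}|^i\}$.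 *)

theory Defs
  imports "HOL-Analysis.Analysis" "HOL-Computational_Algebra.Polynomial_Factorial"
begin

text \<open>Points of the product space are modelled as functions nat => complex,
  with components indexed by 1..N (N = d+s+1), zero outside, and real
  components where the corresponding conjugate is real.\<close>

type_synonym point = "nat \<Rightarrow> complex"

definition Kbar :: "nat \<Rightarrow> (nat \<Rightarrow> complex) \<Rightarrow> point set" where
  "Kbar N bs = {x. (\<forall>j. j \<notin> {1..N} \<longrightarrow> x j = 0) \<and>
                    (\<forall>j\<in>{1..N}. bs j \<in> \<real> \<longrightarrow> x j \<in> \<real>)}"

definition Tmap :: "nat \<Rightarrow> (nat \<Rightarrow> complex) \<Rightarrow> int \<Rightarrow> point \<Rightarrow> point" where
  "Tmap N bs i x = (\<lambda>j. if j \<in> {1..N} then bs j * x j + of_int i else 0)"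

definition Ibeta :: "complex \<Rightarrow> complex set" where
  "Ibeta b = (if b \<in> \<real> \<and> Re b > 1 then {z. z \<in> \<real> \<and> \<bar>Re z\<bar> \<le> 1 / (Re b - 1)}
              else if b \<in> \<real> then {z. z \<in> \<real> \<and> cmod z \<le> 2 / (cmod b - 1)}
              else {z. cmod z \<le> 2 / (cmod b - 1)})"

definition Sset :: "nat \<Rightarrow> nat \<Rightarrow> (nat \<Rightarrow> complex) \<Rightarrow> point set" where
  "Sset N d bs = {x \<in> Kbar N bs. \<forall>j\<in>{1..d}. x j \<in> Ibeta (bs j)}"

definition embed :: "nat \<Rightarrow> (nat \<Rightarrow> complex) \<Rightarrow> int list \<Rightarrow> point" where
  "embed N bs c = (\<lambda>j. if j \<in> {1..N}
      then (\<Sum>i<length c. of_int (c ! i) * bs j ^ (length c - 1 - i)) else 0)"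

definition Xbar :: "nat \<Rightarrow> nat \<Rightarrow> (nat \<Rightarrow> complex) \<Rightarrow> point set" where
  "Xbar N d bs = {embed N bs c | c. set c \<subseteq> {-1, 0, 1}} \<inter> Sset N d bs"

definition mu_n :: "nat \<Rightarrow> nat \<Rightarrow> (nat \<Rightarrow> complex) \<Rightarrow> nat \<Rightarrow> point \<Rightarrow> nat" where
  "mu_n N d bs n x = (if x \<in> Sset N d bs then
      card {(a, b). a \<in> lists {0, 1} \<and> b \<in> lists {0, 1} \<and> length a = n \<and> length b = n
                    \<and> embed N bs (map2 (-) a b) = x}
    else 0)"

text \<open>Discrete measures are represented by their mass functions.\<close>
definition mass :: "(point \<Rightarrow> ennreal) \<Rightarrow> point set \<Rightarrow> ennreal" where
  "mass m A = (\<Sum>\<^sub>\<infinity>x\<in>A. m x)"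

definition Phi :: "nat \<Rightarrow> nat \<Rightarrow> (nat \<Rightarrow> complex) \<Rightarrow> (point \<Rightarrow> ennreal) \<Rightarrow> (point \<Rightarrow> ennreal)" where
  "Phi N d bs m = (\<lambda>y. if y \<in> Sset N d bs then
       mass m {x \<in> Kbar N bs. Tmap N bs (-1) x = y}
     + 2 * mass m {x \<in> Kbar N bs. Tmap N bs 0 x = y}
     + mass m {x \<in> Kbar N bs. Tmap N bs 1 x = y}
     else 0)"

definition delta0 :: "point \<Rightarrow> ennreal" where
  "delta0 = (\<lambda>x. if x = (\<lambda>_. 0) then 1 else 0)"

definition Rset :: "nat \<Rightarrow> nat \<Rightarrow> (nat \<Rightarrow> complex) \<Rightarrow> nat \<Rightarrow> point set" where
  "Rset N d bs n = {x \<in> Xbar N d bs. cmod (x N) \<le> (\<Sum>i<n. cmod (bs N) ^ i)}"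

definition mubar :: "nat \<Rightarrow> nat \<Rightarrow> (nat \<Rightarrow> complex) \<Rightarrow> (point \<Rightarrow> real) \<Rightarrow> point \<Rightarrow> ennreal" where
  "mubar N d bs f = (\<lambda>x. if x \<in> Xbar N d bs then ennreal (f x) else 0)"

end

theory Submission
  imports Defs
begin

text \<open>
  Each application of \<open>\<Phi>\<close> appends one digit pair \<open>(u, v) \<in> {0,1}\<^sup>2\<close> and discards
  mass outside \<open>S\<close>, so \<open>\<Phi>\<^sup>n \<delta>\<^sub>0\<close> is dominated by \<open>\<mu>\<^sub>n\<close>, which counts the digit pairs
  of length \<open>n\<close> representing a point. Concatenating a representation of \<open>0\<close> of length
  \<open>k\<close> with one of \<open>y\<close> of length \<open>n\<close> gives one of \<open>y\<close> of length \<open>k + n\<close>, hence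
  \<open>\<mu>\<^sub>k 0 * \<mu>\<^sub>n y \<le> \<mu>\<^bsub>k+n\<^esub> y\<close>; dividing by \<open>\<lambda>\<^bsup>k+n\<^esup>\<close> and letting \<open>k \<rightarrow> \<infinity>\<close> yields
  \<open>\<mu>\<^sub>n y \<le> \<lambda>\<^sup>n f y / f 0\<close>. Finally, a point with a digit representation of length \<open>n\<close>
  has free coordinate of modulus at most \<open>\<Sum>i<n. |\<beta>\<^sub>N|\<^sup>i\<close>, so the support of \<open>\<mu>\<^sub>n\<close>
  lies in \<open>R\<^sub>n\<close>.
\<close>

lemma embed_Nil: "embed N bs [] = (\<lambda>_. 0)"
  by (auto simp: embed_def)

lemma embed_outside: "j \<notin> {1..N} \<Longrightarrow> embed N bs c j = 0"
  by (simp add: embed_def del: atLeastAtMost_iff)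

lemma embed_snoc: "embed N bs (c @ [t]) = Tmap N bs t (embed N bs c)"
proof
  fix j
  show "embed N bs (c @ [t]) j = Tmap N bs t (embed N bs c) j"
  proof (cases "j \<in> {1..N}")
    case True
    have "(\<Sum>i<length c. of_int ((c @ [t]) ! i) * bs j ^ (length c - i))
        = (\<Sum>i<length c. bs j * (of_int (c ! i) * bs j ^ (length c - 1 - i)))"
    proof (rule sum.cong)
      fix i assume "i \<in> {..<length c}"
      then have "length c - i = Suc (length c - 1 - i)" by auto
      with \<open>i \<in> {..<length c}\<close>
      show "of_int ((c @ [t]) ! i) * bs j ^ (length c - i)
          = bs j * (of_int (c ! i) * bs j ^ (length c - 1 - i))"
        by (simp add: nth_append)
    qed simp
    with True show ?thesis
      by (simp add: embed_def Tmap_def sum_distrib_left)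
  next
    case False
    then show ?thesis by (simp add: Tmap_def embed_outside del: atLeastAtMost_iff)
  qed
qed

lemma embed_append:
  "embed N bs (c0 @ c) = (\<lambda>j. bs j ^ length c * embed N bs c0 j + embed N bs c j)"
proof (induction c rule: rev_induct)
  case Nil
  then show ?case by (simp add: embed_Nil)
next
  case (snoc t c)
  then show ?case
    by (auto simp: embed_snoc[of N bs "c0 @ c", simplified] embed_snoc Tmap_def
        algebra_simps embed_outside simp del: atLeastAtMost_iff)
qed

lemma norm_embed_le:
  assumes "\<forall>t\<in>set c. \<bar>t\<bar> \<le> 1"
  shows "cmod (embed N bs c j) \<le> (\<Sum>i<length c. cmod (bs j) ^ i)"
  using assms
proof (induction c rule: rev_induct)
  case Nil
  then show ?case by (simp add: embed_Nil)
next
  case (snoc t c)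
  have "cmod (of_int t :: complex) \<le> 1"
    using snoc.prems by (simp del: of_int_abs add: of_int_abs[symmetric])
  then have "cmod (embed N bs (c @ [t]) j) \<le> cmod (bs j) * cmod (embed N bs c j) + 1"
    by (auto simp: embed_snoc Tmap_def norm_mult intro: norm_triangle_le)
  also have "\<dots> \<le> cmod (bs j) * (\<Sum>i<length c. cmod (bs j) ^ i) + 1"
    using snoc by (simp add: mult_left_mono)
  also have "\<dots> = (\<Sum>i<length (c @ [t]). cmod (bs j) ^ i)"
    by (simp only: length_append_singleton sum.lessThan_Suc_shift) (simp add: sum_distrib_left)
  finally show ?case .
qed

definition digit_pairs :: "nat \<Rightarrow> (int list \<times> int list) set" where
  "digit_pairs n = {(a, b). a \<in> lists {0, 1} \<and> b \<in> lists {0, 1} \<and> length a = n \<and> length b = n}"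

definition embed_pair :: "nat \<Rightarrow> (nat \<Rightarrow> complex) \<Rightarrow> int list \<times> int list \<Rightarrow> point" where
  "embed_pair N bs q = embed N bs (map2 (-) (fst q) (snd q))"

text \<open>
  The count behind \<open>mu_n\<close> before mass outside \<open>S\<close> is discarded; it obeys an exact recursion.
\<close>

definition count_reps :: "nat \<Rightarrow> (nat \<Rightarrow> complex) \<Rightarrow> nat \<Rightarrow> point \<Rightarrow> nat" where
  "count_reps N bs n y = card {q \<in> digit_pairs n. embed_pair N bs q = y}"

lemma finite_digit_pairs: "finite (digit_pairs n)"
proof -
  have "finite {xs :: int list. set xs \<subseteq> {0, 1} \<and> length xs = n}"
    by (rule finite_lists_length_eq) simp
  moreover have "digit_pairs n \<subseteq>
      {xs. set xs \<subseteq> {0, 1} \<and> length xs = n} \<times> {xs. set xs \<subseteq> {0, 1} \<and> length xs = n}"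
    by (auto simp: digit_pairs_def)
  ultimately show ?thesis
    by (meson finite_SigmaI finite_subset)
qed

lemma digit_pairs_0: "digit_pairs 0 = {([], [])}"
  by (auto simp: digit_pairs_def)

lemma digit_pairs_Suc:
  "digit_pairs (Suc n) =
     (\<lambda>((u, v), (a, b)). (a @ [u], b @ [v])) ` (({0, 1} \<times> {0, 1}) \<times> digit_pairs n)"
  by (fastforce simp: digit_pairs_def length_Suc_conv_rev image_iff)

lemma digit_pairs_diff_digits:
  assumes "(a, b) \<in> digit_pairs n"
  shows "set (map2 (-) a b) \<subseteq> {-1, 0, 1}"
proof
  fix t assume "t \<in> set (map2 (-) a b)"
  then obtain u v where uv: "(u, v) \<in> set (zip a b)" "t = u - v"
    by auto
  from assms have "set a \<subseteq> {0, 1}" "set b \<subseteq> {0, 1}"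
    by (auto simp: digit_pairs_def)
  with set_zip_leftD[OF uv(1)] set_zip_rightD[OF uv(1)] have "u \<in> {0, 1}" "v \<in> {0, 1}"
    by blast+
  with uv(2) show "t \<in> {-1, 0, 1}"
    by auto
qed

lemma embed_pair_snoc:
  assumes "length a = length b"
  shows "embed_pair N bs (a @ [u], b @ [v]) = Tmap N bs (u - v) (embed_pair N bs (a, b))"
  using assms by (simp add: embed_pair_def embed_snoc)

lemma mu_n_eq_count_reps:
  "mu_n N d bs n x = (if x \<in> Sset N d bs then count_reps N bs n x else 0)"
  unfolding mu_n_def count_reps_def digit_pairs_def embed_pair_def
  by (auto intro!: arg_cong[where f = card])

lemma count_reps_0_zero: "count_reps N bs 0 (\<lambda>_. 0) = 1"
proof -
  have "{q \<in> digit_pairs 0. embed_pair N bs q = (\<lambda>_. 0)} = {([], [])}"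
    by (auto simp: digit_pairs_0 embed_pair_def embed_Nil)
  then show ?thesis
    by (simp add: count_reps_def)
qed

lemma count_reps_Suc:
  "count_reps N bs (Suc n) y =
     card {p \<in> digit_pairs n. Tmap N bs (-1) (embed_pair N bs p) = y}
   + 2 * card {p \<in> digit_pairs n. Tmap N bs 0 (embed_pair N bs p) = y}
   + card {p \<in> digit_pairs n. Tmap N bs 1 (embed_pair N bs p) = y}"
proof -
  let ?snoc = "\<lambda>((u, v), (a, b)). (a @ [u], b @ [v]) :: int list \<times> int list"
  let ?B = "\<lambda>i. {p \<in> digit_pairs n. Tmap N bs i (embed_pair N bs p) = y}"
  have "{z \<in> ({0, 1} \<times> {0, 1}) \<times> digit_pairs n. embed_pair N bs (?snoc z) = y}
      = (SIGMA uv : {0, 1} \<times> {0, 1}. ?B (fst uv - snd uv))"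
    by (auto simp: embed_pair_snoc digit_pairs_def)
  then have "{q \<in> digit_pairs (Suc n). embed_pair N bs q = y}
      = ?snoc ` (SIGMA uv : {0, 1} \<times> {0, 1}. ?B (fst uv - snd uv))"
    unfolding digit_pairs_Suc by blast
  moreover have "inj_on ?snoc X" for X
    by (auto simp: inj_on_def)
  ultimately have
    "count_reps N bs (Suc n) y = card (SIGMA uv : {0, 1} \<times> {0, 1}. ?B (fst uv - snd uv))"
    unfolding count_reps_def by (simp add: card_image)
  also have "\<dots> = (\<Sum>uv \<in> {0, 1} \<times> {0, 1}. card (?B (fst uv - snd uv)))"
    by (rule card_SigmaI) (auto simp: finite_digit_pairs)
  also have "\<dots> = card (?B (-1)) + 2 * card (?B 0) + card (?B 1)"
    by simp
  finally show ?thesis .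
qed

lemma count_reps_mult_le:
  "count_reps N bs k x * count_reps N bs n y
     \<le> count_reps N bs (k + n) (\<lambda>j. bs j ^ n * x j + y j)"
proof -
  let ?concat = "\<lambda>((a0, b0), (a, b)). (a0 @ a, b0 @ b) :: int list \<times> int list"
  let ?A = "{q \<in> digit_pairs k. embed_pair N bs q = x} \<times> {p \<in> digit_pairs n. embed_pair N bs p = y}"
  let ?C = "{q \<in> digit_pairs (k + n). embed_pair N bs q = (\<lambda>j. bs j ^ n * x j + y j)}"
  have "inj_on ?concat ?A"
    by (auto simp: inj_on_def digit_pairs_def)
  moreover have "?concat ` ?A \<subseteq> ?C"
    by (auto simp: digit_pairs_def embed_pair_def embed_append)
  ultimately have "card ?A \<le> card ?C"
    by (intro card_inj_on_le) (simp_all add: finite_digit_pairs)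
  then show ?thesis
    by (simp add: count_reps_def card_cartesian_product)
qed

lemma mu_n_mult_le: "mu_n N d bs k (\<lambda>_. 0) * mu_n N d bs n y \<le> mu_n N d bs (k + n) y"
  using count_reps_mult_le[of N bs k "\<lambda>_. 0" n y] by (simp add: mu_n_eq_count_reps)

lemma le_ratio_of_scaled_limits:
  fixes a b :: "nat \<Rightarrow> real"
  assumes "\<And>k. a k * c \<le> b (k + n)"
    and "(\<lambda>k. a k / lam ^ k) \<longlonglongrightarrow> A" "(\<lambda>k. b k / lam ^ k) \<longlonglongrightarrow> B"
    and "0 < A" "0 < lam"
  shows "c \<le> lam ^ n * B / A"
proof -
  have "(\<lambda>k. a k / lam ^ k * (c / lam ^ n)) \<longlonglongrightarrow> A * (c / lam ^ n)"
    using assms(2) by (intro tendsto_mult tendsto_const)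
  moreover have "(\<lambda>k. b (k + n) / lam ^ (k + n)) \<longlonglongrightarrow> B"
    using LIMSEQ_ignore_initial_segment[OF assms(3), of n] by simp
  moreover have "a k / lam ^ k * (c / lam ^ n) \<le> b (k + n) / lam ^ (k + n)" for k
    using assms(1)[of k] assms(5) by (simp add: power_add divide_right_mono)
  ultimately have "A * (c / lam ^ n) \<le> B"
    by (intro LIMSEQ_le) auto
  with assms(4,5) show ?thesis
    by (simp add: field_simps)
qed

lemma mu_n_le_scaled_limits:
  assumes "(\<lambda>k. real (mu_n N d bs k (\<lambda>_. 0)) / lam ^ k) \<longlonglongrightarrow> A"
    and "(\<lambda>k. real (mu_n N d bs k y) / lam ^ k) \<longlonglongrightarrow> B"
    and "0 < A" "0 < lam"
  shows "real (mu_n N d bs n y) \<le> lam ^ n * B / A"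
proof (rule le_ratio_of_scaled_limits[OF _ assms])
  show "real (mu_n N d bs k (\<lambda>_. 0)) * real (mu_n N d bs n y) \<le> real (mu_n N d bs (k + n) y)" for k
    using mu_n_mult_le[of N d bs k n y] by (metis of_nat_le_iff of_nat_mult)
qed

lemma mass_mono:
  assumes "\<And>x. m x \<le> m' x" "A \<subseteq> B"
  shows "mass m A \<le> mass m' B"
  unfolding mass_def
  by (rule infsum_mono_neutral) (use assms in \<open>auto intro: nonneg_summable_on_complete\<close>)

lemma mass_of_card_fibres:
  fixes E :: "'b \<Rightarrow> point"
  assumes "finite Q"
  shows "mass (\<lambda>x. of_nat (card {p \<in> Q. E p = x})) A = of_nat (card {p \<in> Q. E p \<in> A})"
proof -
  have "mass (\<lambda>x. of_nat (card {p \<in> Q. E p = x})) A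
      = (\<Sum>x \<in> A \<inter> E ` Q. of_nat (card {p \<in> Q. E p = x}))"
    unfolding mass_def using assms
    by (subst infsum_cong_neutral[where T = "A \<inter> E ` Q"]) (auto simp: image_iff)
  also have "\<dots> = of_nat (card (\<Union>x \<in> A \<inter> E ` Q. {p \<in> Q. E p = x}))"
    using assms by (subst card_UN_disjoint) auto
  also have "(\<Union>x \<in> A \<inter> E ` Q. {p \<in> Q. E p = x}) = {p \<in> Q. E p \<in> A}"
    by auto
  finally show ?thesis .
qed

lemma mass_UNIV_le_scaled:
  assumes "finite F" "\<And>y. y \<notin> F \<Longrightarrow> m y = 0" "\<And>y. y \<in> F \<Longrightarrow> m y \<le> c * g y"
  shows "mass m UNIV \<le> c * mass g F"
proof -
  have "mass m UNIV = (\<Sum>y \<in> F. m y)"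
    unfolding mass_def using assms(1,2) by (subst infsum_cong_neutral[where T = F]) auto
  also have "\<dots> \<le> (\<Sum>y \<in> F. c * g y)"
    by (rule sum_mono) (rule assms(3))
  also have "\<dots> = c * mass g F"
    using assms(1) by (simp add: mass_def sum_distrib_left)
  finally show ?thesis .
qed

lemma Phi_le_mu_n_Suc:
  assumes "\<And>x. m x \<le> of_nat (count_reps N bs n x)"
  shows "Phi N d bs m y \<le> of_nat (mu_n N d bs (Suc n) y)"
proof -
  have "mass m {x \<in> Kbar N bs. Tmap N bs i x = y}
      \<le> of_nat (card {p \<in> digit_pairs n. Tmap N bs i (embed_pair N bs p) = y})" for i
  proof -
    have "mass m {x \<in> Kbar N bs. Tmap N bs i x = y}
        \<le> mass (\<lambda>x. of_nat (count_reps N bs n x)) {x. Tmap N bs i x = y}"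
      by (rule mass_mono) (use assms in auto)
    then show ?thesis
      unfolding count_reps_def by (simp add: mass_of_card_fibres finite_digit_pairs)
  qed
  then show ?thesis
    unfolding Phi_def mu_n_eq_count_reps count_reps_Suc
    by (auto intro!: add_mono mult_left_mono)
qed

lemma Phi_power_delta0_le_mu_n:
  assumes "(\<lambda>_. 0) \<in> Sset N d bs"
  shows "(Phi N d bs ^^ n) delta0 y \<le> of_nat (mu_n N d bs n y)"
proof (induction n arbitrary: y)
  case 0
  with assms show ?case
    by (simp add: delta0_def mu_n_eq_count_reps count_reps_0_zero)
next
  case (Suc n)
  then have "(Phi N d bs ^^ n) delta0 x \<le> of_nat (count_reps N bs n x)" for x
    by (rule order_trans) (simp add: mu_n_eq_count_reps)
  then show ?case
    by (simp add: Phi_le_mu_n_Suc)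
qed

lemma zero_in_Ibeta: "1 < cmod b \<Longrightarrow> 0 \<in> Ibeta b"
  by (simp add: Ibeta_def)

lemma zero_in_Sset:
  assumes "\<forall>j\<in>{1..d}. 1 < cmod (bs j)"
  shows "(\<lambda>_. 0) \<in> Sset N d bs"
  using assms by (simp add: Sset_def Kbar_def zero_in_Ibeta)

lemma zero_in_Xbar:
  assumes "\<forall>j\<in>{1..d}. 1 < cmod (bs j)"
  shows "(\<lambda>_. 0) \<in> Xbar N d bs"
  unfolding Xbar_def using zero_in_Sset[OF assms, where N = N] embed_Nil[of N bs, symmetric]
  by fastforce

lemma mu_n_nonzeroD:
  assumes "mu_n N d bs n y \<noteq> 0"
  shows "y \<in> Sset N d bs" "y \<in> embed_pair N bs ` digit_pairs n"
proof -
  from assms show "y \<in> Sset N d bs"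
    by (simp add: mu_n_eq_count_reps split: if_splits)
  with assms have "card {q \<in> digit_pairs n. embed_pair N bs q = y} \<noteq> 0"
    by (simp add: mu_n_eq_count_reps count_reps_def)
  then obtain q where "q \<in> digit_pairs n" "embed_pair N bs q = y"
    by (metis (mono_tags, lifting) card.empty empty_Collect_eq)
  then show "y \<in> embed_pair N bs ` digit_pairs n"
    by blast
qed

lemma mu_n_support_subset_Rset: "{y. mu_n N d bs n y \<noteq> 0} \<subseteq> Rset N d bs n"
proof
  fix y assume "y \<in> {y. mu_n N d bs n y \<noteq> 0}"
  then have "y \<in> embed_pair N bs ` digit_pairs n" and yS: "y \<in> Sset N d bs"
    using mu_n_nonzeroD by auto
  then obtain a b where ab: "(a, b) \<in> digit_pairs n" "y = embed N bs (map2 (-) a b)"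
    by (auto simp: embed_pair_def)
  have digits: "set (map2 (-) a b) \<subseteq> {-1, 0, 1}"
    using ab(1) by (rule digit_pairs_diff_digits)
  then have "y \<in> {embed N bs c | c. set c \<subseteq> {-1, 0, 1}}"
    using ab(2) by blast
  with yS have "y \<in> Xbar N d bs"
    by (simp add: Xbar_def)
  moreover have "\<forall>t\<in>set (map2 (-) a b). \<bar>t\<bar> \<le> 1"
    using digits by auto
  from norm_embed_le[OF this, of N bs N] have "cmod (y N) \<le> (\<Sum>i<n. cmod (bs N) ^ i)"
    using ab by (simp add: digit_pairs_def)
  ultimately show "y \<in> Rset N d bs n"
    by (simp add: Rset_def)
qed

lemma finite_mu_n_support: "finite {y. mu_n N d bs n y \<noteq> 0}"
proof (rule finite_subset)
  show "{y. mu_n N d bs n y \<noteq> 0} \<subseteq> embed_pair N bs ` digit_pairs n"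
    using mu_n_nonzeroD by blast
qed (simp add: finite_digit_pairs)

theorem lemma4p1:
  fixes \<beta> :: real and p :: "int poly" and bs :: "nat \<Rightarrow> complex" and d s N :: nat
    and lam :: real and f :: "point \<Rightarrow> real" and n :: nat
  assumes beta_range: "1 < \<beta>" "\<beta> < 2"
    and minpoly: "lead_coeff p = 1" "irreducible p" "poly (map_poly of_int p) (complex_of_real \<beta>) = 0"
    and N_def: "N = d + s + 1"
    and conj_inj: "inj_on bs {1..N}"
    and conj_all: "bs ` {1..N} = {z. poly (map_poly of_int p) z = 0}"
    and no_unit: "\<forall>j\<in>{1..N}. cmod (bs j) \<noteq> 1"
    and beta_first: "d \<ge> 1" "bs 1 = complex_of_real \<beta>"
    and expanding: "\<forall>j\<in>{1..d}. cmod (bs j) > 1"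
    and contracting: "\<forall>j\<in>{d+1..d+s}. cmod (bs j) < 1"
    and free: "bs N \<in> \<real>" "cmod (bs N) > 1"
    and lam: "lam > 1"
    and f_lim: "\<forall>x\<in>Xbar N d bs. (\<lambda>k. real (mu_n N d bs k x) / lam ^ k) \<longlonglongrightarrow> f x"
    and f_pos: "\<forall>x\<in>Xbar N d bs. 0 < f x \<and> f x \<le> f (\<lambda>_. 0)"
  shows "mass ((Phi N d bs ^^ n) delta0) UNIV
           \<le> ennreal (lam ^ n / f (\<lambda>_. 0)) * mass (mubar N d bs f) (Rset N d bs n)"
proof -
  let ?z = "(\<lambda>_. 0) :: point"
  let ?F = "{y. mu_n N d bs n y \<noteq> 0}"
  have z_X: "?z \<in> Xbar N d bs"
    using expanding by (rule zero_in_Xbar)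
  have f_z: "0 < f ?z"
    using f_pos z_X by blast
  have "mass ((Phi N d bs ^^ n) delta0) UNIV
      \<le> ennreal (lam ^ n / f ?z) * mass (mubar N d bs f) ?F"
  proof (rule mass_UNIV_le_scaled[OF finite_mu_n_support])
    have Phi_le: "(Phi N d bs ^^ n) delta0 y \<le> of_nat (mu_n N d bs n y)" for y
      using zero_in_Sset[OF expanding] by (rule Phi_power_delta0_le_mu_n)
    then show "(Phi N d bs ^^ n) delta0 y = 0" if "y \<notin> ?F" for y
      using that Phi_le[of y] by simp
    fix y assume "y \<in> ?F"
    then have y_X: "y \<in> Xbar N d bs"
      using mu_n_support_subset_Rset[of N d bs n] unfolding Rset_def by blast
    have "(Phi N d bs ^^ n) delta0 y \<le> ennreal (real (mu_n N d bs n y))"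
      using Phi_le by (simp add: ennreal_of_nat_eq_real_of_nat)
    also have "\<dots> \<le> ennreal (lam ^ n / f ?z * f y)"
      using mu_n_le_scaled_limits[OF f_lim[rule_format, OF z_X] f_lim[rule_format, OF y_X] f_z] lam
      by (intro ennreal_leI) simp
    also have "\<dots> = ennreal (lam ^ n / f ?z) * mubar N d bs f y"
      using ennreal_mult[of "lam ^ n / f ?z" "f y"] y_X f_z f_pos lam
      by (simp add: mubar_def less_imp_le)
    finally show "(Phi N d bs ^^ n) delta0 y \<le> ennreal (lam ^ n / f ?z) * mubar N d bs f y" .
  qed
  also have "\<dots> \<le> ennreal (lam ^ n / f ?z) * mass (mubar N d bs f) (Rset N d bs n)"
    by (intro mult_left_mono mass_mono mu_n_support_subset_Rset) auto
  finally show ?thesis .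
qed

end
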